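(* For $h\in(0,1]$, $s\in\mathbf{R}$ and $w\in\mathbf{C}$, let $G_n(s,w)=|D|^{n-1}\big(e^{-\frac{1}{2h}(\cdot-w)^2}\big)(s)$. There is a constant $B_n$ depending only on $n$ such that \[|G_n(s,w)|\le B_nh^{-\frac{n-1}{2}}\big(1+h^{-1/2}|s-w|\big)^n\Big(1+e^{\frac{1}{2h}((\mathrm{Im}\,w)^2-(s-\mathrm{Re}\,w)^2)}\Big)\] for all $h\in(0,1]$, $s\in\mathbf{R}$, $w\in\mathbf{C}$.
   Context: $|D|^{n-1}$ denotes the Fourier multiplier on $\mathbf{R}$ with symbol $|\sigma|^{n-1}$, acting in the variable $s$ (for $n$ odd it equals $D_s^{n-1}$, $D_s=-i\partial_s$). *)

theory Defs
  imports "HOL-Analysis.Analysis"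
begin

definition fourier_R :: "(real \<Rightarrow> complex) \<Rightarrow> real \<Rightarrow> complex" where
  "fourier_R f \<sigma> = (LINT x|lborel. exp (- \<i> * complex_of_real (\<sigma> * x)) * f x)"

definition absD_pow :: "nat \<Rightarrow> (real \<Rightarrow> complex) \<Rightarrow> real \<Rightarrow> complex" where
  "absD_pow k f s = complex_of_real (1 / (2 * pi)) *
     (LINT \<sigma>|lborel. exp (\<i> * complex_of_real (s * \<sigma>)) * complex_of_real (\<bar>\<sigma>\<bar> ^ k) * fourier_R f \<sigma>)"

definition G :: "nat \<Rightarrow> real \<Rightarrow> real \<Rightarrow> complex \<Rightarrow> complex" where
  "G n h s w = absD_pow (n - 1)
      (\<lambda>t. exp (- ((complex_of_real t - w) ^ 2) / complex_of_real (2 * h))) s"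

end

theory Submission
  imports Defs "HOL-Probability.Probability" "HOL-Real_Asymp.Real_Asymp"
begin

text \<open>The Fourier transform of a Gaussian is a Gaussian, so with \<open>\<zeta> = (s - w) / sqrt h\<close> and
  \<open>k = n - 1\<close> the function \<open>G n h s w\<close> equals \<open>h powr (-k/2) / sqrt (2 pi)\<close> times
  \<open>J k \<zeta> = \<integral> |x|^k exp (i \<zeta> x - x^2/2) dx\<close> (\<open>abs_moment\<close>), while \<open>|exp (-\<zeta>^2/2)|\<close> is exactly the
  exponential factor of the claim. Write \<open>J k \<zeta> = M k \<zeta> + M k (-\<zeta>)\<close> with half-line moments
  \<open>M k \<zeta> = \<integral>\<^sub>0\<^sup>\<infinity> x^k exp (i \<zeta> x - x^2/2) dx\<close> (\<open>half_moment\<close>). Integration by parts gives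
  \<open>M 1 = i \<zeta> M 0 + 1\<close> and \<open>M (m+2) = i \<zeta> M (m+1) + (m+1) M m\<close>, so by induction everything
  reduces to \<open>|M 0 \<zeta>| \<le> C (1 + |\<zeta>|) (1 + |exp (-\<zeta>^2/2)|)\<close>. Now
  \<open>M 0 \<zeta> = exp (-\<zeta>^2/2) \<integral>\<^sub>0\<^sup>\<infinity> exp (-(x - i \<zeta>)^2/2) dx\<close>, and moving the centre \<open>i t \<zeta>\<close>
  from \<open>t = 1\<close> back to \<open>t = 0\<close> (Fubini applied to the \<open>t\<close>-derivative) changes the integral by
  \<open>i \<zeta> \<integral>\<^sub>0\<^sup>1 exp (t^2 \<zeta>^2/2) dt\<close>, whose integrand has modulus at most \<open>1 + |exp (\<zeta>^2/2)|\<close>.\<close>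

section \<open>Functions dominated by a Gaussian\<close>

lemma power_le_fact_mult_exp:
  assumes "(x::real) \<ge> 0" shows "x ^ j \<le> fact j * exp x"
proof -
  obtain t where t: "exp x = (\<Sum>m<Suc j. x ^ m / fact m) + exp t / fact (Suc j) * x ^ Suc j"
    using Maclaurin_exp_le[of x "Suc j"] by blast
  have "x ^ j / fact j \<le> (\<Sum>m<Suc j. x ^ m / fact m)"
    by (rule member_le_sum[where f="\<lambda>m. x ^ m / fact m"]) (use assms in auto)
  moreover have "0 \<le> exp t / fact (Suc j) * x ^ Suc j" using assms by simp
  ultimately have "x ^ j / fact j \<le> exp x" using t by linarith
  then show ?thesis by (simp add: divide_simps mult.commute)
qed

lemma poly_gauss_le_gauss:
  fixes x c :: real
  assumes "c \<ge> 0"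
  shows "\<bar>x\<bar> ^ j * exp (c * \<bar>x\<bar> - x\<^sup>2 / 2) \<le> fact j * exp ((c + 1)\<^sup>2) * exp (- x\<^sup>2 / 4)"
proof -
  have "\<bar>x\<bar> ^ j * exp (c * \<bar>x\<bar> - x\<^sup>2 / 2) \<le> fact j * exp \<bar>x\<bar> * exp (c * \<bar>x\<bar> - x\<^sup>2 / 2)"
    by (intro mult_right_mono power_le_fact_mult_exp) auto
  also have "\<dots> = fact j * exp ((c + 1) * \<bar>x\<bar> - x\<^sup>2 / 2)"
    by (simp add: exp_add[symmetric] algebra_simps)
  also have "\<dots> \<le> fact j * exp ((c + 1)\<^sup>2 + - x\<^sup>2 / 4)"
  proof -
    have "0 \<le> (\<bar>x\<bar> / 2 - (c + 1))\<^sup>2" by simp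
    then have "(c + 1) * \<bar>x\<bar> - x\<^sup>2 / 2 \<le> (c + 1)\<^sup>2 + - x\<^sup>2 / 4"
      by (simp add: power2_eq_square algebra_simps)
    then show ?thesis by (intro mult_left_mono) auto
  qed
  also have "\<dots> = fact j * exp ((c + 1)\<^sup>2) * exp (- x\<^sup>2 / 4)"
    by (simp only: exp_add mult.assoc)
  finally show ?thesis .
qed

lemma integrable_gauss_quarter: "integrable lborel (\<lambda>x::real. exp (- x\<^sup>2 / 4))"
proof -
  have "integrable lborel (\<lambda>x. sqrt (4 * pi) * normal_density 0 (sqrt 2) x)"
    by (intro integrable_mult_right integrable_normal_density) simp
  moreover have "sqrt (4 * pi) * normal_density 0 (sqrt 2) x = exp (- x\<^sup>2 / 4)" for x
    by (simp add: normal_density_def)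
  ultimately show ?thesis by simp
qed

lemma integrable_poly_gauss_dominated:
  fixes f :: "real \<Rightarrow> 'a::{banach, second_countable_topology}"
  assumes "f \<in> borel_measurable borel" "c \<ge> 0" "K \<ge> 0"
    and "\<And>x. norm (f x) \<le> K * (\<bar>x\<bar> ^ j * exp (c * \<bar>x\<bar> - x\<^sup>2 / 2))"
  shows "integrable lborel f"
proof (rule Bochner_Integration.integrable_bound)
  show "integrable lborel (\<lambda>x. K * (fact j * exp ((c + 1)\<^sup>2) * exp (- x\<^sup>2 / 4)))"
    by (intro integrable_mult_right integrable_gauss_quarter)
  show "AE x in lborel. norm (f x) \<le> norm (K * (fact j * exp ((c + 1)\<^sup>2) * exp (- x\<^sup>2 / 4)))"
    using order_trans[OF assms(4) mult_left_mono[OF poly_gauss_le_gauss[OF assms(2)] assms(3)]]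
      assms(3) by simp
qed (use assms(1) in simp)

lemma tendsto_zero_poly_gauss_dominated:
  fixes f :: "real \<Rightarrow> 'a::real_normed_vector"
  assumes "c \<ge> 0" "K \<ge> 0"
    and "\<And>x. norm (f x) \<le> K * (\<bar>x\<bar> ^ j * exp (c * \<bar>x\<bar> - x\<^sup>2 / 2))"
  shows "(f \<longlongrightarrow> 0) at_top"
proof (rule Lim_null_comparison)
  show "\<forall>\<^sub>F x in at_top. norm (f x) \<le> K * (fact j * exp ((c + 1)\<^sup>2) * exp (- x\<^sup>2 / 4))"
    using order_trans[OF assms(3) mult_left_mono[OF poly_gauss_le_gauss[OF assms(1)] assms(2)]]
    by simp
  show "((\<lambda>x. K * (fact j * exp ((c + 1)\<^sup>2) * exp (- x\<^sup>2 / 4))) \<longlongrightarrow> 0) at_top"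
    by real_asymp
qed

lemma integral_Ioi_FTC:
  fixes F f :: "real \<Rightarrow> complex"
  assumes "\<And>x. (F has_vector_derivative f x) (at x)" "\<And>x. isCont f x"
    and "integrable lborel (\<lambda>x. indicator {0<..} x *\<^sub>R f x)"
    and "(F \<longlongrightarrow> 0) at_top"
  shows "(\<integral>x. indicator {0<..} x *\<^sub>R f x \<partial>lborel) = - F 0"
proof -
  have Ioi: "einterval (ereal 0) \<infinity> = {0<..}"
    by (auto simp: einterval_def)
  have "isCont F 0" using assms(1)[of 0] by (rule has_vector_derivative_continuous)
  have "(LBINT x=ereal 0..\<infinity>. f x) = 0 - F 0"
  proof (rule interval_integral_FTC_integrable)
    show "set_integrable lborel (einterval (ereal 0) \<infinity>) f"
      using assms(3) by (simp add: set_integrable_def Ioi)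
    show "((F \<circ> real_of_ereal) \<longlongrightarrow> F 0) (at_right (ereal 0))"
      unfolding ereal_tendsto_simps1
      using \<open>isCont F 0\<close> by (simp add: isCont_def filterlim_at_split)
    show "((F \<circ> real_of_ereal) \<longlongrightarrow> 0) (at_left \<infinity>)"
      unfolding ereal_tendsto_simps1 using assms(4) .
  qed (use assms(1,2) in auto)
  then show ?thesis
    by (simp add: interval_lebesgue_integral_def set_lebesgue_integral_def Ioi)
qed

lemma integrable_lborel_pair_dominated:
  fixes f :: "real \<times> real \<Rightarrow> 'a::{banach, second_countable_topology}"
  assumes "f \<in> borel_measurable (lborel \<Otimes>\<^sub>M lborel)" "integrable lborel g" "\<And>x. g x \<ge> 0"
    and "\<And>t x. norm (f (t, x)) \<le> indicator {a..b} t * g x"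
  shows "integrable (lborel \<Otimes>\<^sub>M lborel) f"
proof -
  note assms(1)[measurable]
  have integrable_slice: "integrable lborel (\<lambda>x. f (t, x))" for t
  proof (rule Bochner_Integration.integrable_bound)
    show "integrable lborel (\<lambda>x. indicator {a..b} t * g x)"
      using assms(2) by (rule integrable_mult_right)
    show "AE x in lborel. norm (f (t, x)) \<le> norm (indicator {a..b} t * g x)"
      using assms(3,4) by (intro AE_I2) (simp add: abs_mult)
  qed (use assms(1) in simp)
  have slice_le: "(\<integral>x. norm (f (t, x)) \<partial>lborel) \<le> indicator {a..b} t * integral\<^sup>L lborel g" for t
  proof -
    have "(\<integral>x. norm (f (t, x)) \<partial>lborel) \<le> (\<integral>x. indicator {a..b} t * g x \<partial>lborel)"
      by (intro integral_mono integrable_norm integrable_slice integrable_mult_right assms(2,4))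
    then show ?thesis by simp
  qed
  have "integral\<^sup>L lborel g \<ge> 0"
    using assms(3) by (intro integral_nonneg_AE) simp
  have "integrable lborel (\<lambda>t. \<integral>x. norm (f (t, x)) \<partial>lborel)"
  proof (rule Bochner_Integration.integrable_bound)
    show "integrable lborel (\<lambda>t. indicator {a..b} t * integral\<^sup>L lborel g)"
      by (intro Bochner_Integration.integrable_mult_left integrable_real_indicator)
         (auto simp: emeasure_lborel_Icc_eq)
    show "AE t in lborel. norm (\<integral>x. norm (f (t, x)) \<partial>lborel)
        \<le> norm (indicator {a..b} t * integral\<^sup>L lborel g)"
      using \<open>integral\<^sup>L lborel g \<ge> 0\<close> slice_le
      by (intro AE_I2) (simp add: integral_nonneg_AE abs_mult)
  qed measurable
  then show ?thesis
    using assms(1) integrable_slice by (intro lborel_pair.Fubini_integrable) auto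
qed

section \<open>Moments of the Gaussian wave\<close>

definition gauss_wave :: "complex \<Rightarrow> real \<Rightarrow> complex" where
  "gauss_wave z x = exp (\<i> * z * complex_of_real x - (complex_of_real x)\<^sup>2 / 2)"

definition half_moment :: "nat \<Rightarrow> complex \<Rightarrow> complex" where
  "half_moment k z = (\<integral>x. indicator {0<..} x *\<^sub>R (complex_of_real x ^ k * gauss_wave z x) \<partial>lborel)"

definition abs_moment :: "nat \<Rightarrow> complex \<Rightarrow> complex" where
  "abs_moment k z = (\<integral>x. complex_of_real (\<bar>x\<bar> ^ k) * gauss_wave z x \<partial>lborel)"

definition gauss_growth :: "complex \<Rightarrow> real" where
  "gauss_growth z = exp (((Im z)\<^sup>2 - (Re z)\<^sup>2) / 2)"

lemma norm_exp_neg_square_half: "norm (exp (- z\<^sup>2 / 2)) = gauss_growth z"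
  by (simp add: gauss_growth_def power2_eq_square field_simps)

lemma norm_gauss_wave_le: "norm (gauss_wave z x) \<le> exp (\<bar>Im z\<bar> * \<bar>x\<bar> - x\<^sup>2 / 2)"
proof -
  have "- Im z * x \<le> \<bar>Im z\<bar> * \<bar>x\<bar>"
    by (metis abs_ge_minus_self abs_minus abs_mult mult_minus_left)
  then show ?thesis by (simp add: gauss_wave_def power2_eq_square)
qed

lemma norm_power_gauss_wave_le:
  "norm (complex_of_real x ^ k * gauss_wave z x) \<le> \<bar>x\<bar> ^ k * exp (\<bar>Im z\<bar> * \<bar>x\<bar> - x\<^sup>2 / 2)"
  by (simp add: norm_mult norm_power mult_left_mono norm_gauss_wave_le)

lemma isCont_gauss_wave [continuous_intros]: "isCont (gauss_wave z) x"
  unfolding gauss_wave_def by (auto intro!: continuous_intros)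

lemma gauss_wave_measurable [measurable]: "gauss_wave z \<in> borel_measurable borel"
  unfolding gauss_wave_def by measurable

lemma gauss_wave_minus: "gauss_wave z (- x) = gauss_wave (- z) x"
  by (simp add: gauss_wave_def)

lemma gauss_wave_has_vector_derivative:
  "(gauss_wave z has_vector_derivative ((\<i> * z - complex_of_real x) * gauss_wave z x)) (at x)"
proof -
  have "((\<lambda>u. exp (\<i> * z * u - u\<^sup>2 / 2)) has_field_derivative
          ((\<i> * z - complex_of_real x) * exp (\<i> * z * complex_of_real x - (complex_of_real x)\<^sup>2 / 2)))
          (at (complex_of_real x))"
    by (auto intro!: derivative_eq_intros simp: algebra_simps)
  from has_vector_derivative_real_field[OF this] show ?thesis
    by (simp add: gauss_wave_def[abs_def])
qed

lemma integrable_half_moment: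
  "integrable lborel (\<lambda>x. indicator {0<..} x *\<^sub>R (complex_of_real x ^ k * gauss_wave z x))"
proof (rule integrable_poly_gauss_dominated[where c="\<bar>Im z\<bar>" and K=1 and j=k])
  fix x
  show "norm (indicator {0<..} x *\<^sub>R (complex_of_real x ^ k * gauss_wave z x))
      \<le> 1 * (\<bar>x\<bar> ^ k * exp (\<bar>Im z\<bar> * \<bar>x\<bar> - x\<^sup>2 / 2))"
    using norm_power_gauss_wave_le[of x k z] by (auto simp: indicator_def)
qed auto

lemma half_moment_one: "half_moment 1 z = \<i> * z * half_moment 0 z + 1"
proof -
  let ?f = "\<lambda>x. (\<i> * z - complex_of_real x) * gauss_wave z x"
  let ?M = "\<lambda>k x. indicator {0<..} x *\<^sub>R (complex_of_real x ^ k * gauss_wave z x)"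
  have split: "indicator {0<..} x *\<^sub>R ?f x = \<i> * z * ?M 0 x - ?M 1 x" for x
    by (simp add: indicator_def algebra_simps)
  have "(\<integral>x. indicator {0<..} x *\<^sub>R ?f x \<partial>lborel) = - gauss_wave z 0"
  proof (rule integral_Ioi_FTC)
    show "integrable lborel (\<lambda>x. indicator {0<..} x *\<^sub>R ?f x)"
      unfolding split
      by (intro Bochner_Integration.integrable_diff integrable_mult_right integrable_half_moment)
    show "(gauss_wave z \<longlongrightarrow> 0) at_top"
      using norm_power_gauss_wave_le[where k=0]
      by (intro tendsto_zero_poly_gauss_dominated[where c="\<bar>Im z\<bar>" and K=1 and j=0]) auto
  qed (auto intro!: gauss_wave_has_vector_derivative continuous_intros)
  moreover have "gauss_wave z 0 = 1" by (simp add: gauss_wave_def)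
  ultimately have "\<i> * z * half_moment 0 z - half_moment 1 z = -1"
    unfolding split half_moment_def
    by (simp only: Bochner_Integration.integral_diff integrable_half_moment integrable_mult_right
        integral_mult_right_zero)
  then show ?thesis by (simp add: algebra_simps)
qed

lemma half_moment_Suc_Suc:
  "half_moment (Suc (Suc m)) z = \<i> * z * half_moment (Suc m) z + of_nat (Suc m) * half_moment m z"
proof -
  let ?F = "\<lambda>x. complex_of_real x ^ Suc m * gauss_wave z x"
  let ?f = "\<lambda>x. of_nat (Suc m) * complex_of_real x ^ m * gauss_wave z x
               + complex_of_real x ^ Suc m * ((\<i> * z - complex_of_real x) * gauss_wave z x)"
  let ?M = "\<lambda>k x. indicator {0<..} x *\<^sub>R (complex_of_real x ^ k * gauss_wave z x)"
  have split: "indicator {0<..} x *\<^sub>R ?f x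
      = of_nat (Suc m) * ?M m x + \<i> * z * ?M (Suc m) x - ?M (Suc (Suc m)) x" for x
    by (simp add: indicator_def algebra_simps)
  have "(\<integral>x. indicator {0<..} x *\<^sub>R ?f x \<partial>lborel) = - ?F 0"
  proof (rule integral_Ioi_FTC)
    show "(?F has_vector_derivative ?f x) (at x)" for x
    proof -
      have "((\<lambda>u. u ^ Suc m) has_field_derivative of_nat (Suc m) * complex_of_real x ^ m)
          (at (complex_of_real x))"
        using DERIV_power_Suc[OF DERIV_ident, where n=m] by (simp add: add_ac)
      from has_vector_derivative_real_field[OF this]
      have "((\<lambda>x. complex_of_real x ^ Suc m) has_vector_derivative
              of_nat (Suc m) * complex_of_real x ^ m) (at x)"
        by simp
      from has_vector_derivative_mult[OF this gauss_wave_has_vector_derivative[of z x]] show ?thesis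
        by (simp add: algebra_simps)
    qed
    show "integrable lborel (\<lambda>x. indicator {0<..} x *\<^sub>R ?f x)"
      unfolding split
      by (intro Bochner_Integration.integrable_diff Bochner_Integration.integrable_add
          integrable_mult_right integrable_half_moment)
    show "(?F \<longlongrightarrow> 0) at_top"
      by (intro tendsto_zero_poly_gauss_dominated[where c="\<bar>Im z\<bar>" and K=1 and j="Suc m"])
         (simp_all only: mult_1 norm_power_gauss_wave_le abs_ge_zero)
  qed (auto intro!: continuous_intros)
  then have "of_nat (Suc m) * half_moment m z + \<i> * z * half_moment (Suc m) z
      - half_moment (Suc (Suc m)) z = 0"
    unfolding split half_moment_def
    by (simp only: Bochner_Integration.integral_diff Bochner_Integration.integral_add
        Bochner_Integration.integrable_add integrable_half_moment integrable_mult_right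
        integral_mult_right_zero) simp
  then show ?thesis by (simp add: algebra_simps)
qed

lemma abs_moment_eq_half_moments: "abs_moment k z = half_moment k z + half_moment k (- z)"
proof -
  let ?f = "\<lambda>x. complex_of_real (\<bar>x\<bar> ^ k) * gauss_wave z x"
  have integrable: "integrable lborel (\<lambda>x. indicator A x *\<^sub>R ?f x)" if "A \<in> sets borel" for A
  proof (rule integrable_poly_gauss_dominated[where c="\<bar>Im z\<bar>" and K=1 and j=k])
    show "norm (indicator A x *\<^sub>R ?f x) \<le> 1 * (\<bar>x\<bar> ^ k * exp (\<bar>Im z\<bar> * \<bar>x\<bar> - x\<^sup>2 / 2))" for x
      using norm_power_gauss_wave_le[of x k z]
      by (auto simp: indicator_def norm_mult norm_power)
  qed (use that in auto)
  have "abs_moment k z = (\<integral>x. indicator {0<..} x *\<^sub>R ?f x + indicator {..0} x *\<^sub>R ?f x \<partial>lborel)"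
    unfolding abs_moment_def by (intro Bochner_Integration.integral_cong) (auto simp: indicator_def)
  also have "\<dots> = (\<integral>x. indicator {0<..} x *\<^sub>R ?f x \<partial>lborel) + (\<integral>x. indicator {..0} x *\<^sub>R ?f x \<partial>lborel)"
    by (intro Bochner_Integration.integral_add integrable) auto
  also have "(\<integral>x. indicator {0<..} x *\<^sub>R ?f x \<partial>lborel) = half_moment k z"
    unfolding half_moment_def by (intro Bochner_Integration.integral_cong) (auto simp: indicator_def)
  also have "(\<integral>x. indicator {..0} x *\<^sub>R ?f x \<partial>lborel)
      = \<bar>- 1\<bar> *\<^sub>R (\<integral>x. indicator {..0} (0 + - 1 * x) *\<^sub>R ?f (0 + - 1 * x) \<partial>lborel)"
    by (rule lborel_integral_real_affine) simp
  also have "\<dots> = half_moment k (- z)"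
    unfolding half_moment_def
    by (simp, intro integral_cong_AE)
       (auto intro!: eventually_mono[OF AE_lborel_singleton[of 0]] simp: indicator_def gauss_wave_minus)
  finally show ?thesis .
qed

section \<open>Shifting the contour\<close>

definition shifted_gauss :: "complex \<Rightarrow> real \<Rightarrow> real \<Rightarrow> complex" where
  "shifted_gauss z t x = exp (- (complex_of_real x - \<i> * complex_of_real t * z)\<^sup>2 / 2)"

definition shift_slope :: "complex \<Rightarrow> real \<Rightarrow> real \<Rightarrow> complex" where
  "shift_slope z t x = (complex_of_real x - \<i> * complex_of_real t * z) * shifted_gauss z t x"

definition contour_correction :: "complex \<Rightarrow> complex" where
  "contour_correction z =
     (\<integral>t. indicator {0..1} t *\<^sub>R (\<i> * z * exp (complex_of_real t ^ 2 * z\<^sup>2 / 2)) \<partial>lborel)"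

lemma isCont_shifted_gauss [continuous_intros]:
  "isCont (shifted_gauss z t) x" "isCont (shift_slope z t) x" "isCont (\<lambda>t. shift_slope z t x) t"
  unfolding shift_slope_def shifted_gauss_def by (auto intro!: continuous_intros)

lemma shifted_gauss_measurable [measurable]:
  "(\<lambda>(t, x). shifted_gauss z t x) \<in> borel_measurable (lborel \<Otimes>\<^sub>M lborel)"
  unfolding shifted_gauss_def by measurable

lemma shift_slope_measurable [measurable]:
  "(\<lambda>(t, x). shift_slope z t x) \<in> borel_measurable (lborel \<Otimes>\<^sub>M lborel)"
  unfolding shift_slope_def by measurable

lemma shift_slope_measurable_space [measurable]: "shift_slope z t \<in> borel_measurable borel"
  unfolding shift_slope_def shifted_gauss_def by measurable

lemma shifted_gauss_has_vector_derivative_shift: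
  "((\<lambda>t. shifted_gauss z t x) has_vector_derivative (\<i> * z * shift_slope z t x)) (at t within A)"
proof -
  have "((\<lambda>u. exp (- (complex_of_real x - \<i> * u * z)\<^sup>2 / 2)) has_field_derivative
          (\<i> * z * shift_slope z t x)) (at (complex_of_real t))"
    unfolding shift_slope_def shifted_gauss_def
    by (auto intro!: derivative_eq_intros simp: field_simps power2_eq_square)
  from has_vector_derivative_real_field[OF this] show ?thesis
    by (simp add: shifted_gauss_def[abs_def])
qed

lemma shifted_gauss_has_vector_derivative:
  "((\<lambda>x. - shifted_gauss z t x) has_vector_derivative (shift_slope z t x)) (at x)"
proof -
  have "((\<lambda>u. - exp (- (u - \<i> * complex_of_real t * z)\<^sup>2 / 2)) has_field_derivative
          (shift_slope z t x)) (at (complex_of_real x))"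
    unfolding shift_slope_def shifted_gauss_def
    by (auto intro!: derivative_eq_intros simp: field_simps power2_eq_square)
  from has_vector_derivative_real_field[OF this] show ?thesis
    by (simp add: shifted_gauss_def[abs_def])
qed

lemma gauss_wave_eq_shifted_gauss: "gauss_wave z x = shifted_gauss z 1 x * exp (- z\<^sup>2 / 2)"
  unfolding gauss_wave_def shifted_gauss_def
  by (subst exp_add[symmetric]) (rule arg_cong[where f=exp], simp add: field_simps power2_eq_square)

lemma norm_shifted_gauss_le:
  assumes "t \<in> {0..1}"
  shows "norm (shifted_gauss z t x) \<le> exp ((Re z)\<^sup>2 / 2) * exp (\<bar>Im z\<bar> * \<bar>x\<bar> - x\<^sup>2 / 2)"
proof -
  have "(t * Re z)\<^sup>2 \<le> (Re z)\<^sup>2"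
    using assms by (simp add: power_mult_distrib mult_left_le_one_le power_le_one)
  moreover have "\<bar>t * Im z * x\<bar> \<le> \<bar>Im z\<bar> * \<bar>x\<bar>"
    using assms by (simp add: abs_mult mult.assoc mult_left_le_one_le)
  moreover have "- (t * Im z * x) \<le> \<bar>t * Im z * x\<bar>" by (rule abs_ge_minus_self)
  moreover have "0 \<le> (t * Im z)\<^sup>2" by simp
  ultimately have "- x\<^sup>2 / 2 - t * Im z * x - (t * Im z)\<^sup>2 / 2 + (t * Re z)\<^sup>2 / 2
      \<le> (Re z)\<^sup>2 / 2 + (\<bar>Im z\<bar> * \<bar>x\<bar> - x\<^sup>2 / 2)"
    by linarith
  moreover have "norm (shifted_gauss z t x)
      = exp (- x\<^sup>2 / 2 - t * Im z * x - (t * Im z)\<^sup>2 / 2 + (t * Re z)\<^sup>2 / 2)"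
    by (simp add: shifted_gauss_def power2_eq_square field_simps)
  ultimately show ?thesis by (simp add: exp_add[symmetric])
qed

lemma norm_shift_slope_le:
  assumes "t \<in> {0..1}"
  shows "norm (shift_slope z t x)
    \<le> (1 + cmod z) * exp ((Re z)\<^sup>2 / 2) * exp ((\<bar>Im z\<bar> + 1) * \<bar>x\<bar> - x\<^sup>2 / 2)"
proof -
  have "norm (complex_of_real x - \<i> * complex_of_real t * z) \<le> \<bar>x\<bar> + \<bar>t\<bar> * cmod z"
    using norm_triangle_ineq4[of "complex_of_real x" "\<i> * complex_of_real t * z"]
    by (simp add: norm_mult)
  also have "\<dots> \<le> (1 + cmod z) * (1 + \<bar>x\<bar>)"
  proof -
    have "\<bar>t\<bar> * cmod z \<le> cmod z" using assms by (simp add: mult_left_le_one_le)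
    moreover have "0 \<le> cmod z * \<bar>x\<bar>" by simp
    moreover have "(1 + cmod z) * (1 + \<bar>x\<bar>) = 1 + \<bar>x\<bar> + cmod z + cmod z * \<bar>x\<bar>"
      by (simp add: algebra_simps)
    ultimately show ?thesis by linarith
  qed
  also have "\<dots> \<le> (1 + cmod z) * exp \<bar>x\<bar>"
    by (intro mult_left_mono exp_ge_add_one_self) auto
  finally have "norm (shift_slope z t x)
      \<le> (1 + cmod z) * exp \<bar>x\<bar> * (exp ((Re z)\<^sup>2 / 2) * exp (\<bar>Im z\<bar> * \<bar>x\<bar> - x\<^sup>2 / 2))"
    unfolding shift_slope_def norm_mult
    by (intro mult_mono norm_shifted_gauss_le assms) auto
  then show ?thesis by (simp add: exp_add[symmetric] algebra_simps)
qed

definition contour_integrand :: "complex \<Rightarrow> real \<times> real \<Rightarrow> complex" where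
  "contour_integrand z =
     (\<lambda>(t, x). indicator {0..1} t *\<^sub>R (indicator {0<..} x *\<^sub>R (\<i> * z * shift_slope z t x)))"

lemma integrable_contour_integrand:
  "integrable (lborel \<Otimes>\<^sub>M lborel) (contour_integrand z)"
proof -
  define K where "K = cmod z * ((1 + cmod z) * exp ((Re z)\<^sup>2 / 2))"
  have "K \<ge> 0" by (simp add: K_def)
  show ?thesis
  proof (rule integrable_lborel_pair_dominated)
    show "contour_integrand z \<in> borel_measurable (lborel \<Otimes>\<^sub>M lborel)"
      unfolding contour_integrand_def by measurable
    show "integrable lborel (\<lambda>x. K * exp ((\<bar>Im z\<bar> + 1) * \<bar>x\<bar> - x\<^sup>2 / 2))"
      by (rule integrable_poly_gauss_dominated[where c="\<bar>Im z\<bar> + 1" and K=K and j=0])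
         (use \<open>K \<ge> 0\<close> in auto)
    show "norm (contour_integrand z (t, x))
        \<le> indicator {0..1} t * (K * exp ((\<bar>Im z\<bar> + 1) * \<bar>x\<bar> - x\<^sup>2 / 2))" for t x
      using mult_left_mono[OF norm_shift_slope_le, of t "cmod z" z x]
      by (auto simp: contour_integrand_def indicator_def norm_mult K_def mult.assoc)
  qed (use \<open>K \<ge> 0\<close> in simp)
qed

lemma integral_contour_integrand_shift:
  "(\<integral>t. contour_integrand z (t, x) \<partial>lborel)
     = indicator {0<..} x *\<^sub>R (shifted_gauss z 1 x - shifted_gauss z 0 x)"
proof -
  have "(\<integral>t. indicator {0..1} t *\<^sub>R (\<i> * z * shift_slope z t x) \<partial>lborel)
      = shifted_gauss z 1 x - shifted_gauss z 0 x"
    by (rule integral_FTC_Icc)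
       (auto intro!: shifted_gauss_has_vector_derivative_shift continuous_at_imp_continuous_on
          continuous_intros)
  moreover have "(\<integral>t. contour_integrand z (t, x) \<partial>lborel)
      = indicator {0<..} x *\<^sub>R (\<integral>t. indicator {0..1} t *\<^sub>R (\<i> * z * shift_slope z t x) \<partial>lborel)"
    unfolding contour_integrand_def integral_scaleR_right[symmetric] by (simp add: mult.commute)
  ultimately show ?thesis by simp
qed

lemma integral_contour_integrand_space:
  "(\<integral>x. contour_integrand z (t, x) \<partial>lborel)
     = indicator {0..1} t *\<^sub>R (\<i> * z * exp (complex_of_real t ^ 2 * z\<^sup>2 / 2))"
proof (cases "t \<in> {0..1}")
  case True
  have "(\<integral>x. indicator {0<..} x *\<^sub>R shift_slope z t x \<partial>lborel) = - (- shifted_gauss z t 0)"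
  proof (rule integral_Ioi_FTC)
    show "integrable lborel (\<lambda>x. indicator {0<..} x *\<^sub>R shift_slope z t x)"
    proof (rule integrable_poly_gauss_dominated[where c="\<bar>Im z\<bar> + 1" and j=0])
      show "norm (indicator {0<..} x *\<^sub>R shift_slope z t x) \<le> (1 + cmod z) * exp ((Re z)\<^sup>2 / 2)
          * (\<bar>x\<bar> ^ 0 * exp ((\<bar>Im z\<bar> + 1) * \<bar>x\<bar> - x\<^sup>2 / 2))" for x
        using norm_shift_slope_le[OF True, of z x] by (auto simp: indicator_def)
    qed auto
    show "((\<lambda>x. - shifted_gauss z t x) \<longlongrightarrow> 0) at_top"
      using norm_shifted_gauss_le[OF True]
      by (intro tendsto_zero_poly_gauss_dominated[where c="\<bar>Im z\<bar>" and K="exp ((Re z)\<^sup>2 / 2)"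
            and j=0]) auto
  qed (auto intro!: shifted_gauss_has_vector_derivative continuous_intros)
  then have "(\<integral>x. \<i> * z * (indicator {0<..} x *\<^sub>R shift_slope z t x) \<partial>lborel)
      = \<i> * z * shifted_gauss z t 0"
    by (subst integral_mult_right_zero) simp
  moreover have "(\<integral>x. contour_integrand z (t, x) \<partial>lborel)
      = (\<integral>x. \<i> * z * (indicator {0<..} x *\<^sub>R shift_slope z t x) \<partial>lborel)"
    using True unfolding contour_integrand_def
    by (intro Bochner_Integration.integral_cong) (auto simp: indicator_def)
  ultimately show ?thesis
    using True by (simp add: shifted_gauss_def power2_eq_square algebra_simps)
qed (simp add: contour_integrand_def)

lemma half_moment_zero_eq:
  "half_moment 0 z = (half_moment 0 0 + contour_correction z) * exp (- z\<^sup>2 / 2)"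
proof -
  have integrable_shifted: "integrable lborel (\<lambda>x. indicator {0<..} x *\<^sub>R shifted_gauss z t x)"
    if "t \<in> {0..1}" for t
  proof (rule integrable_poly_gauss_dominated[where c="\<bar>Im z\<bar>" and j=0])
    show "norm (indicator {0<..} x *\<^sub>R shifted_gauss z t x)
        \<le> exp ((Re z)\<^sup>2 / 2) * (\<bar>x\<bar> ^ 0 * exp (\<bar>Im z\<bar> * \<bar>x\<bar> - x\<^sup>2 / 2))" for x
      using norm_shifted_gauss_le[OF that, of z x] by (auto simp: indicator_def)
  qed auto
  have shift_one: "half_moment 0 z
      = (\<integral>x. indicator {0<..} x *\<^sub>R shifted_gauss z 1 x \<partial>lborel) * exp (- z\<^sup>2 / 2)"
    unfolding half_moment_def
    by (subst integral_mult_left_zero[symmetric], intro Bochner_Integration.integral_cong)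
       (auto simp: gauss_wave_eq_shifted_gauss)
  have shift_zero: "half_moment 0 0 = (\<integral>x. indicator {0<..} x *\<^sub>R shifted_gauss z 0 x \<partial>lborel)"
    unfolding half_moment_def by (simp add: gauss_wave_def shifted_gauss_def)
  have "(\<integral>x. (\<integral>t. contour_integrand z (t, x) \<partial>lborel) \<partial>lborel)
      = (\<integral>t. (\<integral>x. contour_integrand z (t, x) \<partial>lborel) \<partial>lborel)"
    using lborel_pair.Fubini_integral[of "\<lambda>t x. contour_integrand z (t, x)"]
      integrable_contour_integrand[of z] by simp
  then have "(\<integral>x. indicator {0<..} x *\<^sub>R shifted_gauss z 1 x \<partial>lborel) - half_moment 0 0
      = contour_correction z"
    unfolding integral_contour_integrand_shift integral_contour_integrand_space shift_zero
      contour_correction_def scaleR_diff_right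
    by (simp add: Bochner_Integration.integral_diff integrable_shifted)
  then show ?thesis by (simp add: shift_one algebra_simps)
qed

section \<open>Growth of the moments\<close>

lemma exp_scaled_le_one_plus_exp:
  assumes "t \<in> {0..1::real}"
  shows "exp (t\<^sup>2 * d / 2) \<le> 1 + exp (d / 2)"
proof (cases "d \<ge> 0")
  case True
  then have "t\<^sup>2 * d \<le> d"
    using assms by (simp add: mult_left_le_one_le power_le_one)
  then show ?thesis by (smt (verit) exp_gt_zero exp_le_cancel_iff divide_right_mono)
next
  case False
  then have "t\<^sup>2 * d / 2 \<le> 0" by (simp add: mult_nonneg_nonpos)
  then show ?thesis by (smt (verit) exp_gt_zero exp_le_one_iff)
qed

lemma norm_contour_correction_le:
  "norm (contour_correction z) \<le> cmod z * (1 + exp (((Re z)\<^sup>2 - (Im z)\<^sup>2) / 2))"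
proof -
  let ?c = "cmod z * (1 + exp (((Re z)\<^sup>2 - (Im z)\<^sup>2) / 2))"
  have "norm (contour_correction z) \<le> (\<integral>t. indicator {0..1} (t::real) * ?c \<partial>lborel)"
    unfolding contour_correction_def
  proof (rule order_trans[OF integral_norm_bound integral_mono])
    show "integrable lborel (\<lambda>t::real. indicator {0..1} t * ?c)"
      by (intro Bochner_Integration.integrable_mult_left integrable_real_indicator) auto
    show "integrable lborel (\<lambda>t. norm (indicator {0..1} t *\<^sub>R (\<i> * z * exp (complex_of_real t ^ 2 * z\<^sup>2 / 2))))"
      by (rule integrable_norm, rule borel_integrable_compact) (auto intro!: continuous_intros)
    fix t :: real
    show "norm (indicator {0..1} t *\<^sub>R (\<i> * z * exp (complex_of_real t ^ 2 * z\<^sup>2 / 2)))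
        \<le> indicator {0..1} t * ?c"
    proof (cases "t \<in> {0..1}")
      case True
      have "norm (\<i> * z * exp (complex_of_real t ^ 2 * z\<^sup>2 / 2))
          = cmod z * exp (t\<^sup>2 * ((Re z)\<^sup>2 - (Im z)\<^sup>2) / 2)"
        by (simp add: norm_mult power2_eq_square algebra_simps)
      also have "\<dots> \<le> ?c" by (intro mult_left_mono exp_scaled_le_one_plus_exp True) auto
      finally show ?thesis using True by simp
    qed simp
  qed
  then show ?thesis by simp
qed

lemma norm_half_moment_zero_le:
  "norm (half_moment 0 z) \<le> (norm (half_moment 0 0) + 1) * (1 + cmod z) * (1 + gauss_growth z)"
proof -
  define Q where "Q = gauss_growth z"
  have Q: "Q \<ge> 0" "Q * exp (((Re z)\<^sup>2 - (Im z)\<^sup>2) / 2) = 1"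
    by (simp_all add: Q_def gauss_growth_def exp_add[symmetric] field_simps)
  have "norm (half_moment 0 z) = norm (half_moment 0 0 + contour_correction z) * Q"
    by (subst half_moment_zero_eq) (simp only: norm_mult Q_def norm_exp_neg_square_half)
  also have "\<dots> \<le> (norm (half_moment 0 0) + cmod z * (1 + exp (((Re z)\<^sup>2 - (Im z)\<^sup>2) / 2))) * Q"
    using norm_triangle_ineq[of "half_moment 0 0" "contour_correction z"] norm_contour_correction_le[of z]
    by (intro mult_right_mono Q) linarith
  also have "\<dots> = norm (half_moment 0 0) * Q + cmod z * (Q + 1)"
    using Q by (simp add: algebra_simps)
  also have "\<dots> \<le> (norm (half_moment 0 0) + 1) * (1 + cmod z) * (1 + Q)"
    using Q by (simp add: algebra_simps)
  finally show ?thesis unfolding Q_def .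
qed

definition half_moment_bounded :: "nat \<Rightarrow> bool" where
  "half_moment_bounded k \<longleftrightarrow>
     (\<exists>C\<ge>0. \<forall>z. norm (half_moment k z) \<le> C * (1 + cmod z) ^ Suc k * (1 + gauss_growth z))"

lemma half_moment_bounded_zero: "half_moment_bounded 0"
  unfolding half_moment_bounded_def
  using norm_half_moment_zero_le by (intro exI[of _ "norm (half_moment 0 0) + 1"]) auto

lemma half_moment_bounded_one: "half_moment_bounded 1"
proof -
  obtain C where C: "C \<ge> 0" "\<And>z. norm (half_moment 0 z) \<le> C * (1 + cmod z) * (1 + gauss_growth z)"
    using half_moment_bounded_zero unfolding half_moment_bounded_def by auto
  show ?thesis unfolding half_moment_bounded_def
  proof (intro exI[of _ "C + 1"] conjI allI)
    fix z
    define u where "u = 1 + cmod z"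
    define R where "R = 1 + gauss_growth z"
    have u: "u \<ge> 1" "cmod z \<le> u" and R: "R \<ge> 1"
      by (auto simp: u_def R_def gauss_growth_def)
    have "norm (half_moment 1 z) \<le> cmod z * norm (half_moment 0 z) + 1"
      unfolding half_moment_one using norm_triangle_ineq[of "\<i> * z * half_moment 0 z" 1]
      by (simp add: norm_mult)
    moreover have "1 * 1 * 1 \<le> u * u * R"
      using u R by (intro mult_mono) auto
    ultimately have "norm (half_moment 1 z) \<le> cmod z * norm (half_moment 0 z) + u * u * R"
      by linarith
    also have "\<dots> \<le> u * (C * u * R) + u * u * R"
      using u C(2)[of z] unfolding u_def[symmetric] R_def[symmetric]
      by (intro add_right_mono mult_mono) auto
    finally show "norm (half_moment 1 z) \<le> (C + 1) * (1 + cmod z) ^ Suc 1 * (1 + gauss_growth z)"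
      by (simp add: u_def[symmetric] R_def[symmetric] power2_eq_square algebra_simps)
  qed (use C in auto)
qed

lemma half_moment_bounded_Suc_Suc:
  assumes "half_moment_bounded k" "half_moment_bounded (Suc k)"
  shows "half_moment_bounded (Suc (Suc k))"
proof -
  obtain C0 where C0: "C0 \<ge> 0"
    "\<And>z. norm (half_moment k z) \<le> C0 * (1 + cmod z) ^ Suc k * (1 + gauss_growth z)"
    using assms(1) unfolding half_moment_bounded_def by auto
  obtain C1 where C1: "C1 \<ge> 0"
    "\<And>z. norm (half_moment (Suc k) z) \<le> C1 * (1 + cmod z) ^ Suc (Suc k) * (1 + gauss_growth z)"
    using assms(2) unfolding half_moment_bounded_def by auto
  show ?thesis unfolding half_moment_bounded_def
  proof (intro exI[of _ "C1 + real (Suc k) * C0"] conjI allI)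
    fix z
    define u where "u = 1 + cmod z"
    define R where "R = 1 + gauss_growth z"
    have u: "u \<ge> 1" "cmod z \<le> u" and R: "R \<ge> 1"
      by (auto simp: u_def R_def gauss_growth_def)
    have "u ^ Suc k \<le> u ^ Suc (Suc (Suc k))" using u by (intro power_increasing) auto
    then have lower: "C0 * u ^ Suc k * R \<le> C0 * u ^ Suc (Suc (Suc k)) * R"
      using C0(1) R by (intro mult_left_mono mult_right_mono) auto
    have "norm (half_moment (Suc (Suc k)) z)
        \<le> cmod z * norm (half_moment (Suc k) z) + real (Suc k) * norm (half_moment k z)"
      unfolding half_moment_Suc_Suc
      using norm_triangle_ineq[of "\<i> * z * half_moment (Suc k) z" "of_nat (Suc k) * half_moment k z"]
      by (simp add: norm_mult norm_of_nat del: of_nat_Suc)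
    also have "\<dots> \<le> u * (C1 * u ^ Suc (Suc k) * R) + real (Suc k) * (C0 * u ^ Suc (Suc (Suc k)) * R)"
      using u C1(2)[of z] order_trans[OF C0(2)[of z, folded u_def R_def] lower]
      unfolding u_def[symmetric] R_def[symmetric]
      by (intro add_mono mult_mono mult_left_mono) auto
    finally show "norm (half_moment (Suc (Suc k)) z)
        \<le> (C1 + real (Suc k) * C0) * (1 + cmod z) ^ Suc (Suc (Suc k)) * (1 + gauss_growth z)"
      by (simp add: u_def[symmetric] R_def[symmetric] algebra_simps)
  qed (use C0 C1 in auto)
qed

lemma half_moments_bounded: "half_moment_bounded k"
proof -
  have "half_moment_bounded k \<and> half_moment_bounded (Suc k)"
    by (induction k)
       (use half_moment_bounded_zero half_moment_bounded_one half_moment_bounded_Suc_Suc in auto)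
  then show ?thesis ..
qed

lemma abs_moment_bound:
  "\<exists>C\<ge>0. \<forall>z. norm (abs_moment k z) \<le> C * (1 + cmod z) ^ Suc k * (1 + gauss_growth z)"
proof -
  obtain C where C: "C \<ge> 0"
    "\<And>z. norm (half_moment k z) \<le> C * (1 + cmod z) ^ Suc k * (1 + gauss_growth z)"
    using half_moments_bounded[of k] unfolding half_moment_bounded_def by auto
  have "norm (abs_moment k z) \<le> 2 * C * (1 + cmod z) ^ Suc k * (1 + gauss_growth z)" for z
    using norm_triangle_ineq[of "half_moment k z" "half_moment k (- z)"] C(2)[of z] C(2)[of "- z"]
    by (simp add: abs_moment_eq_half_moments gauss_growth_def)
  then show ?thesis using C(1) by (intro exI[of _ "2 * C"]) auto
qed

section \<open>Reduction of \<open>G\<close> to the moments\<close>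

lemma integral_gauss_char:
  "(\<integral>x. exp (- x\<^sup>2 / 2) *\<^sub>R exp (\<i> * complex_of_real (\<theta> * x)) \<partial>lborel) =
     complex_of_real (sqrt (2 * pi) * exp (- \<theta>\<^sup>2 / 2))"
proof -
  have "(\<integral>x. std_normal_density x *\<^sub>R exp (\<i> * complex_of_real (\<theta> * x)) \<partial>lborel)
      = complex_of_real (exp (- \<theta>\<^sup>2 / 2))"
  proof -
    have "char std_normal_distribution \<theta> = complex_of_real (exp (- \<theta>\<^sup>2 / 2))"
      by (simp add: char_std_normal_distribution)
    then show ?thesis unfolding char_def by (subst (asm) integral_density) auto
  qed
  then have "(1 / sqrt (2 * pi)) *\<^sub>R
      (\<integral>x. exp (- x\<^sup>2 / 2) *\<^sub>R exp (\<i> * complex_of_real (\<theta> * x)) \<partial>lborel)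
      = complex_of_real (exp (- \<theta>\<^sup>2 / 2))"
    by (simp add: std_normal_density_def integral_scaleR_right[symmetric])
  then show ?thesis by (simp add: scaleR_conv_of_real field_simps)
qed

lemma gauss_exponent_affine:
  fixes s a b \<sigma> y :: real
  assumes "s > 0"
  shows "exp (- \<i> * complex_of_real (\<sigma> * (a + s * y))) *
         exp (- ((complex_of_real (a + s * y) - (complex_of_real a + \<i> * complex_of_real b)) ^ 2)
               / complex_of_real (2 * s\<^sup>2))
       = exp (- \<i> * complex_of_real (\<sigma> * a) + complex_of_real (b\<^sup>2 / (2 * s\<^sup>2))) *
         (exp (- y\<^sup>2 / 2) *\<^sub>R exp (\<i> * complex_of_real ((b / s - \<sigma> * s) * y)))"
proof -
  have "complex_of_real s \<noteq> 0" using assms by simp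
  then have "- \<i> * complex_of_real (\<sigma> * (a + s * y)) +
      (- ((complex_of_real (a + s * y) - (complex_of_real a + \<i> * complex_of_real b)) ^ 2)
        / complex_of_real (2 * s\<^sup>2))
    = - \<i> * complex_of_real (\<sigma> * a) + complex_of_real (b\<^sup>2 / (2 * s\<^sup>2)) +
      (complex_of_real (- y\<^sup>2 / 2) + \<i> * complex_of_real ((b / s - \<sigma> * s) * y))"
    by (simp add: field_simps power2_eq_square)
  moreover have "exp (- y\<^sup>2 / 2) *\<^sub>R exp (\<i> * complex_of_real ((b / s - \<sigma> * s) * y))
      = exp (complex_of_real (- y\<^sup>2 / 2) + \<i> * complex_of_real ((b / s - \<sigma> * s) * y))"
    by (simp only: scaleR_conv_of_real exp_of_real exp_add)
  ultimately show ?thesis by (simp add: exp_add[symmetric])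
qed

lemma fourier_R_gauss:
  assumes "h > 0"
  shows "fourier_R (\<lambda>t. exp (- ((complex_of_real t - w) ^ 2) / complex_of_real (2 * h))) \<sigma>
       = complex_of_real (sqrt (2 * pi * h))
           * exp (- complex_of_real (h * \<sigma>\<^sup>2 / 2) - \<i> * complex_of_real \<sigma> * w)"
proof -
  define s where "s = sqrt h"
  define a where "a = Re w"
  define b where "b = Im w"
  define \<theta> where "\<theta> = b / s - \<sigma> * s"
  define cst where "cst = exp (- \<i> * complex_of_real (\<sigma> * a) + complex_of_real (b\<^sup>2 / (2 * s\<^sup>2)))"
  have s: "s > 0" "h = s\<^sup>2" "complex_of_real s \<noteq> 0" using assms by (simp_all add: s_def)
  have w: "w = complex_of_real a + \<i> * complex_of_real b" by (simp add: a_def b_def complex_eq)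
  let ?F = "\<lambda>x. exp (- \<i> * complex_of_real (\<sigma> * x))
    * exp (- ((complex_of_real x - w) ^ 2) / complex_of_real (2 * h))"
  have "fourier_R (\<lambda>t. exp (- ((complex_of_real t - w) ^ 2) / complex_of_real (2 * h))) \<sigma>
      = \<bar>s\<bar> *\<^sub>R (\<integral>y. ?F (a + s * y) \<partial>lborel)"
    unfolding fourier_R_def by (rule lborel_integral_real_affine) (use s in simp)
  also have "(\<integral>y. ?F (a + s * y) \<partial>lborel)
      = (\<integral>y. cst * (exp (- y\<^sup>2 / 2) *\<^sub>R exp (\<i> * complex_of_real (\<theta> * y))) \<partial>lborel)"
    unfolding cst_def \<theta>_def s(2) w
    by (intro Bochner_Integration.integral_cong refl gauss_exponent_affine s)
  also have "\<dots> = cst * complex_of_real (sqrt (2 * pi) * exp (- \<theta>\<^sup>2 / 2))"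
    by (subst integral_mult_right_zero) (simp only: integral_gauss_char)
  also have "\<bar>s\<bar> *\<^sub>R (cst * complex_of_real (sqrt (2 * pi) * exp (- \<theta>\<^sup>2 / 2))) =
      complex_of_real (sqrt (2 * pi) * s) * (cst * exp (complex_of_real (- \<theta>\<^sup>2 / 2)))"
    using s by (simp only: exp_of_real) (simp add: scaleR_conv_of_real mult_ac)
  also have "cst * exp (complex_of_real (- \<theta>\<^sup>2 / 2))
      = exp (- complex_of_real (h * \<sigma>\<^sup>2 / 2) - \<i> * complex_of_real \<sigma> * w)"
  proof -
    have "- \<i> * complex_of_real (\<sigma> * a) + complex_of_real (b\<^sup>2 / (2 * s\<^sup>2)) + complex_of_real (- \<theta>\<^sup>2 / 2)
        = - complex_of_real (h * \<sigma>\<^sup>2 / 2) - \<i> * complex_of_real \<sigma> * w"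
      unfolding \<theta>_def s(2) w using s(3) by (simp add: field_simps power2_eq_square)
    then show ?thesis unfolding cst_def by (simp only: exp_add[symmetric])
  qed
  also have "sqrt (2 * pi) * s = sqrt (2 * pi * h)" by (simp add: s_def real_sqrt_mult)
  finally show ?thesis .
qed

lemma gauss_wave_rescaled:
  assumes "h * c\<^sup>2 = 1"
  shows "exp (\<i> * complex_of_real (s * (c * \<tau>)))
      * exp (- complex_of_real (h * (c * \<tau>)\<^sup>2 / 2) - \<i> * complex_of_real (c * \<tau>) * w)
    = gauss_wave ((complex_of_real s - w) * complex_of_real c) \<tau>"
proof -
  have "complex_of_real (h * (c * \<tau>)\<^sup>2 / 2) = (complex_of_real \<tau>)\<^sup>2 / 2"
    using assms by (simp add: power_mult_distrib mult.assoc[symmetric] mult.commute)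
  then have "\<i> * complex_of_real (s * (c * \<tau>))
      + (- complex_of_real (h * (c * \<tau>)\<^sup>2 / 2) - \<i> * complex_of_real (c * \<tau>) * w)
    = \<i> * ((complex_of_real s - w) * complex_of_real c) * complex_of_real \<tau> - (complex_of_real \<tau>)\<^sup>2 / 2"
    by (simp add: algebra_simps)
  then show ?thesis
    unfolding gauss_wave_def by (simp only: exp_add[symmetric])
qed

lemma G_eq_abs_moment:
  assumes "h > 0"
  defines "c \<equiv> h powr (-1/2)"
  shows "G n h s w = complex_of_real (c ^ (n - 1) / sqrt (2 * pi))
                       * abs_moment (n - 1) ((complex_of_real s - w) * complex_of_real c)"
proof -
  define k where "k = n - 1"
  define \<zeta> where "\<zeta> = (complex_of_real s - w) * complex_of_real c"
  have c: "c > 0" "h * c\<^sup>2 = 1" "c * sqrt (2 * pi * h) = sqrt (2 * pi)"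
    using assms(1) by (simp_all add: c_def powr_minus_divide powr_half_sqrt real_sqrt_mult power_divide)
  let ?H = "\<lambda>\<sigma>. exp (\<i> * complex_of_real (s * \<sigma>)) * complex_of_real (\<bar>\<sigma>\<bar> ^ k) *
      (complex_of_real (sqrt (2 * pi * h))
         * exp (- complex_of_real (h * \<sigma>\<^sup>2 / 2) - \<i> * complex_of_real \<sigma> * w))"
  have "G n h s w = complex_of_real (1 / (2 * pi)) * (\<integral>\<sigma>. ?H \<sigma> \<partial>lborel)"
    unfolding G_def absD_pow_def k_def[symmetric] fourier_R_gauss[OF assms(1)] ..
  also have "(\<integral>\<sigma>. ?H \<sigma> \<partial>lborel) = c *\<^sub>R (\<integral>\<tau>. ?H (0 + c * \<tau>) \<partial>lborel)"
    using lborel_integral_real_affine[of c ?H 0] c by simp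
  also have "(\<integral>\<tau>. ?H (0 + c * \<tau>) \<partial>lborel) =
      (\<integral>\<tau>. complex_of_real (sqrt (2 * pi * h) * c ^ k)
             * (complex_of_real (\<bar>\<tau>\<bar> ^ k) * gauss_wave \<zeta> \<tau>) \<partial>lborel)"
  proof (intro Bochner_Integration.integral_cong refl)
    fix \<tau>
    have "\<bar>c * \<tau>\<bar> ^ k = c ^ k * \<bar>\<tau>\<bar> ^ k"
      using c by (simp add: abs_mult power_mult_distrib)
    then show "?H (0 + c * \<tau>) = complex_of_real (sqrt (2 * pi * h) * c ^ k)
        * (complex_of_real (\<bar>\<tau>\<bar> ^ k) * gauss_wave \<zeta> \<tau>)"
      using gauss_wave_rescaled[OF c(2), where s=s and w=w and \<tau>=\<tau>, folded \<zeta>_def] by (simp add: mult_ac)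
  qed
  also have "\<dots> = complex_of_real (sqrt (2 * pi * h) * c ^ k) * abs_moment k \<zeta>"
    unfolding abs_moment_def by (rule integral_mult_right_zero)
  finally have "G n h s w = complex_of_real (1 / (2 * pi) * (c * sqrt (2 * pi * h)) * c ^ k)
      * abs_moment k \<zeta>"
    by (simp add: scaleR_conv_of_real mult_ac)
  also have "1 / (2 * pi) * (c * sqrt (2 * pi * h)) = 1 / sqrt (2 * pi)"
    using c(3) real_sqrt_pow2[of "2 * pi"] by (simp add: field_simps power2_eq_square)
  finally show ?thesis
    unfolding \<zeta>_def k_def by simp
qed

lemma norm_G_eq_abs_moment:
  assumes "h > 0" "n \<ge> 1"
  shows "cmod (G n h s w) = h powr (- (real n - 1) / 2) / sqrt (2 * pi)
           * norm (abs_moment (n - 1) ((complex_of_real s - w) * complex_of_real (h powr (-1/2))))"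
proof -
  have "(h powr (-1/2)) ^ (n - 1) = h powr (real (n - 1) * (-1/2))"
    using assms(1) by (intro powr_power) simp
  also have "real (n - 1) * (-1/2) = - (real n - 1) / 2"
    using assms(2) by (simp add: of_nat_diff field_simps)
  finally show ?thesis
    unfolding G_eq_abs_moment[OF assms(1)] by (simp add: norm_mult norm_divide norm_power)
qed

lemma gauss_growth_rescaled:
  assumes "h > 0"
  shows "gauss_growth ((complex_of_real s - w) * complex_of_real (h powr (-1/2)))
           = exp (((Im w)\<^sup>2 - (s - Re w)\<^sup>2) / (2 * h))"
proof -
  define c where "c = h powr (-1/2)"
  have "c\<^sup>2 = 1 / h"
    using assms by (simp add: c_def powr_minus_divide powr_half_sqrt power_divide)
  moreover have "(Im ((complex_of_real s - w) * complex_of_real c))\<^sup>2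
      - (Re ((complex_of_real s - w) * complex_of_real c))\<^sup>2 = c\<^sup>2 * ((Im w)\<^sup>2 - (s - Re w)\<^sup>2)"
    by (simp add: power2_eq_square algebra_simps)
  ultimately show ?thesis
    unfolding gauss_growth_def c_def[symmetric] by (simp add: field_simps)
qed

theorem lemma2p2:
  fixes n :: nat
  assumes "n \<ge> 1"
  shows "\<exists>B::real. \<forall>h::real. \<forall>s::real. \<forall>w::complex. 0 < h \<longrightarrow> h \<le> 1 \<longrightarrow>
           cmod (G n h s w) \<le> B * h powr (- (real n - 1) / 2)
             * (1 + h powr (-1/2) * cmod (complex_of_real s - w)) ^ n
             * (1 + exp (((Im w)\<^sup>2 - (s - Re w)\<^sup>2) / (2 * h)))"
proof -
  obtain C where C: "C \<ge> 0" "\<And>z. norm (abs_moment (n - 1) z)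
      \<le> C * (1 + cmod z) ^ n * (1 + gauss_growth z)"
    using abs_moment_bound[of "n - 1"] assms by auto
  show ?thesis
  proof (intro exI[of _ "C / sqrt (2 * pi)"] allI impI)
    fix h s :: real and w :: complex
    assume h: "0 < h" "h \<le> 1"
    define \<zeta> where "\<zeta> = (complex_of_real s - w) * complex_of_real (h powr (-1/2))"
    have "cmod (G n h s w) = h powr (- (real n - 1) / 2) / sqrt (2 * pi) * norm (abs_moment (n - 1) \<zeta>)"
      unfolding \<zeta>_def using h(1) assms by (rule norm_G_eq_abs_moment)
    also have "\<dots> \<le> h powr (- (real n - 1) / 2) / sqrt (2 * pi)
        * (C * (1 + cmod \<zeta>) ^ n * (1 + gauss_growth \<zeta>))"
      by (intro mult_left_mono C(2)) auto
    finally show "cmod (G n h s w) \<le> C / sqrt (2 * pi) * h powr (- (real n - 1) / 2)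
        * (1 + h powr (-1/2) * cmod (complex_of_real s - w)) ^ n
        * (1 + exp (((Im w)\<^sup>2 - (s - Re w)\<^sup>2) / (2 * h)))"
      unfolding \<zeta>_def gauss_growth_rescaled[OF h(1)] by (simp add: norm_mult mult_ac)
  qed
qed

end
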